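(* Let $(S,W)$ be the spherical Coxeter complex of type $A_n$. Let $\alpha\subset S$ be a root and $v\in\alpha\setminus\partial\alpha$ a vertex in its interior. Then $\lambda_v:=\sin d(v,\partial\alpha)>0$ depends only on the type of the vertex $v$ (and not on $\alpha$). In particular, if $K\subsetneq S$ is a top-dimensional convex subcomplex containing $v$ in its interior, then $f_K(v)=-\lambda_v$, which is independent of $K$.
   Context: $(S,W)$ is the unit sphere $S$ in the hyperplane $\{\sum x_i=0\}\subset\mathbb{R}^{n+1}$ together with the Weyl group $W$ of the root system $A_n$ (permutations of coordinates), acting by reflections. Walls are fixed spheres of reflections in $W$; roots are closed hemispheres bounded by walls, $\partial\alpha$ the boundary wall; Weyl chambers are closures of components of the complement of the walls; faces are intersections of chambers with intersections of walls; vertices are 0-dimensional faces. The type of a vertex is its image under the projection $S\to S/W$ (the model Weyl chamber, whose vertices are labelled). A convex subcomplex $K$ is an intersection of roots; it is top-dimensional if $\dim K=\dim S$. For a proper top-dimensional convex subcomplex $K$, $f_K(x)=\max_{\alpha\in\Lambda_K}\{-\sin d(x,\partial\alpha)\}$ for $x\in K$, where $\Lambda_K$ is the set of roots containing $K$. *)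

theory Defs
  imports "HOL-Analysis.Analysis"
begin

text \<open>Spherical Coxeter complex of type A_n.  The ambient space R^(n+1) is
  real^'n with CARD('n) = n+1.\<close>

definition Sph :: "(real^'n) set" where
  "Sph = {x. (\<Sum>i\<in>UNIV. x $ i) = 0 \<and> norm x = 1}"

definition perm_act :: "('n \<Rightarrow> 'n) \<Rightarrow> real^'n \<Rightarrow> real^'n" where
  "perm_act \<sigma> x = (\<chi> i. x $ \<sigma> i)"

definition Weyl :: "(real^'n \<Rightarrow> real^'n) set" where
  "Weyl = {perm_act \<sigma> | \<sigma>. bij \<sigma>}"

definition is_reflection :: "(real^'n \<Rightarrow> real^'n) \<Rightarrow> bool" where
  "is_reflection w \<longleftrightarrow> w \<in> Weyl \<and>
     (\<exists>u. u \<noteq> 0 \<and> (\<forall>x. w x = x - (2 * (x \<bullet> u) / (u \<bullet> u)) *\<^sub>R u))"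

definition is_wall :: "(real^'n) set \<Rightarrow> bool" where
  "is_wall H \<longleftrightarrow> (\<exists>w. is_reflection w \<and> H = {x \<in> Sph. w x = x})"

definition is_root :: "(real^'n) set \<Rightarrow> bool" where
  "is_root \<alpha> \<longleftrightarrow> (\<exists>u. u \<noteq> 0 \<and> is_wall {x \<in> Sph. x \<bullet> u = 0} \<and>
                        \<alpha> = {x \<in> Sph. 0 \<le> x \<bullet> u})"

definition root_bdry :: "(real^'n) set \<Rightarrow> (real^'n) set" where
  "root_bdry \<alpha> = (THE H. is_wall H \<and>
      (\<exists>u. u \<noteq> 0 \<and> H = {x \<in> Sph. x \<bullet> u = 0} \<and> \<alpha> = {x \<in> Sph. 0 \<le> x \<bullet> u}))"

definition is_chamber :: "(real^'n) set \<Rightarrow> bool" where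
  "is_chamber C \<longleftrightarrow> (\<exists>x \<in> Sph - \<Union>{H. is_wall H}.
      C = closure (connected_component_set (Sph - \<Union>{H. is_wall H}) x))"

definition is_face :: "(real^'n) set \<Rightarrow> bool" where
  "is_face F \<longleftrightarrow> (\<exists>C \<H>. is_chamber C \<and> (\<forall>H\<in>\<H>. is_wall H) \<and> F = C \<inter> \<Inter>\<H>)"

definition is_vertex :: "real^'n \<Rightarrow> bool" where
  "is_vertex v \<longleftrightarrow> is_face {v}"

text \<open>Type of a vertex: its image in S/W, i.e. its W-orbit.\<close>
definition vtype :: "real^'n \<Rightarrow> (real^'n) set" where
  "vtype v = (\<lambda>w. w v) ` Weyl"

definition sdist :: "real^'n \<Rightarrow> real^'n \<Rightarrow> real" where
  "sdist x y = arccos (x \<bullet> y)"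

definition sdist_set :: "real^'n \<Rightarrow> (real^'n) set \<Rightarrow> real" where
  "sdist_set x A = Inf (sdist x ` A)"

definition convex_subcomplex :: "(real^'n) set \<Rightarrow> bool" where
  "convex_subcomplex K \<longleftrightarrow> (\<exists>\<A>. (\<forall>\<alpha>\<in>\<A>. is_root \<alpha>) \<and> K = Sph \<inter> \<Inter>\<A>)"

text \<open>Top-dimensional: dim K = dim S (linear dimension of the spans; the
  spherical dimensions are these minus one).\<close>
definition top_dimensional :: "(real^'n) set \<Rightarrow> bool" where
  "top_dimensional K \<longleftrightarrow> dim K = dim (Sph :: (real^'n) set)"

definition s_interior :: "(real^'n) set \<Rightarrow> (real^'n) set" where
  "s_interior K = {x \<in> K. \<exists>e>0. Sph \<inter> ball x e \<subseteq> K}"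

definition Lambda :: "(real^'n) set \<Rightarrow> (real^'n) set set" where
  "Lambda K = {\<alpha>. is_root \<alpha> \<and> K \<subseteq> \<alpha>}"

definition fK :: "(real^'n) set \<Rightarrow> real^'n \<Rightarrow> real" where
  "fK K x = Max ((\<lambda>\<alpha>. - sin (sdist_set x (root_bdry \<alpha>))) ` Lambda K)"

end

theory Submission
  imports Defs
begin

text \<open>Every wall of \<open>S\<close> is a hyperplane \<open>x\<^sub>k = x\<^sub>l\<close>, and the sine of the angular distance from a
  point \<open>v\<close> of \<open>S\<close> to it is the length \<open>\<bar>v\<^sub>k - v\<^sub>l\<bar> / \<surd>2\<close> of the component of \<open>v\<close> normal to it.
  A vertex has only two distinct coordinate values: a coordinatewise strictly increasing map,
  followed by projection back to \<open>S\<close>, keeps every chamber and every wall, hence fixes each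
  vertex, and a suitable such map visibly moves any point with three distinct coordinate values.
  So \<open>\<lambda>\<^sub>v = \<bar>a - b\<bar> / \<surd>2\<close> for the two values \<open>a \<noteq> b\<close> of \<open>v\<close>, which is invariant under permuting
  coordinates. An interior vertex of \<open>K\<close> lies off the boundary of every root containing \<open>K\<close>, so
  all terms of the maximum defining \<open>f\<^sub>K(v)\<close> coincide.\<close>

lemma closed_Sph: "closed (Sph :: (real^'n) set)"
proof -
  have "Sph = {x::real^'n. (\<Sum>i\<in>UNIV. x $ i) = 0} \<inter> {x. norm x = 1}"
    by (auto simp: Sph_def)
  moreover have "closed {x::real^'n. (\<Sum>i\<in>UNIV. x $ i) = 0}" "closed {x::real^'n. norm x = 1}"
    by (intro closed_Collect_eq continuous_intros)+
  ultimately show ?thesis by (metis closed_Int)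
qed

lemma Sph_uminus: "- x \<in> Sph \<longleftrightarrow> x \<in> Sph"
  by (simp add: Sph_def sum_negf)

lemma Sph_not_const:
  assumes "x \<in> (Sph :: (real^'n) set)"
  obtains i j where "x $ i \<noteq> x $ j"
proof (rule ccontr)
  assume "\<not> thesis"
  define a where "a = x $ undefined"
  have const: "x $ i = a" for i
    using that \<open>\<not> thesis\<close> unfolding a_def by blast
  have "real CARD('n) * a = 0" using assms by (simp add: Sph_def const)
  hence "x = 0" using const by (simp add: vec_eq_iff)
  with assms show False by (simp add: Sph_def)
qed

lemma unit_vec_in_Sph:
  assumes "z \<noteq> 0" "(\<Sum>i\<in>UNIV. z $ i) = 0"
  shows "(1 / norm z) *\<^sub>R z \<in> Sph"
  using assms by (simp add: Sph_def sum_divide_distrib[symmetric])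

lemma sum_axis_one: "(\<Sum>i\<in>UNIV. axis k (1::real) $ i) = 1"
  by (simp add: axis_def)

section \<open>Walls\<close>

lemma perm_act_reflection_vector:
  assumes "bij \<sigma>" "u \<noteq> 0"
    and refl: "\<And>x. perm_act \<sigma> x = x - (2 * (x \<bullet> u) / (u \<bullet> u)) *\<^sub>R u"
  obtains k l c where "k \<noteq> l" "c \<noteq> 0" "u = c *\<^sub>R (axis k 1 - axis l 1)"
proof -
  txt \<open>The reflection sends \<open>e\<^sub>k\<close> to the basis vector \<open>e\<^sub>l\<close>, \<open>l = \<sigma>\<^sup>-\<^sup>1 k\<close>; comparing coordinates
    with \<open>e\<^sub>k - c u\<close> forces \<open>u \<parallel> e\<^sub>k - e\<^sub>l\<close>.\<close>
  obtain k where uk: "u $ k \<noteq> 0" using assms(2) by (auto simp: vec_eq_iff)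
  define c where "c = 2 / (u \<bullet> u) * u $ k"
  have c: "c \<noteq> 0" using assms(2) uk by (simp add: c_def)
  define l where "l = inv \<sigma> k"
  have \<sigma>_eq_k: "\<sigma> i = k \<longleftrightarrow> i = l" for i
    using assms(1) unfolding l_def by (metis bij_inv_eq_iff)
  have axis_image: "(if i = l then 1 else 0) = (if i = k then 1 else 0) - c * u $ i" for i
  proof -
    have "perm_act \<sigma> (axis k 1) $ i = (axis k 1 - (2 * u $ k / (u \<bullet> u)) *\<^sub>R u) $ i"
      using refl[of "axis k 1"] by (simp add: inner_axis')
    thus ?thesis by (simp add: perm_act_def axis_def \<sigma>_eq_k c_def)
  qed
  have "l \<noteq> k"
  proof
    assume "l = k"
    hence "c * u $ k = 0" using axis_image[of k] by simp
    thus False using c uk by simp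
  qed
  moreover have "u = (1 / c) *\<^sub>R (axis k 1 - axis l 1)"
    unfolding vec_eq_iff
  proof
    fix i show "u $ i = ((1 / c) *\<^sub>R (axis k 1 - axis l 1)) $ i"
      using axis_image[of i] c by (auto simp: axis_def field_simps)
  qed
  ultimately show ?thesis using that[of k l "1 / c"] c by simp
qed

lemma inner_axis_diff: "x \<bullet> (axis k 1 - axis l 1) = x $ k - x $ l"
  by (simp add: inner_diff_right inner_axis)

lemma wall_eq_coord_eq:
  assumes "is_wall (H :: (real^'n) set)"
  obtains k l where "k \<noteq> l" "H = {x\<in>Sph. x $ k = x $ l}"
proof -
  obtain \<sigma> u where H: "H = {x\<in>Sph. perm_act \<sigma> x = x}" and "bij \<sigma>" "u \<noteq> 0"
    and refl: "\<And>x. perm_act \<sigma> x = x - (2 * (x \<bullet> u) / (u \<bullet> u)) *\<^sub>R u"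
    using assms unfolding is_wall_def is_reflection_def Weyl_def by blast
  obtain k l c where kl: "k \<noteq> l" and "c \<noteq> 0" and u: "u = c *\<^sub>R (axis k 1 - axis l 1)"
    using perm_act_reflection_vector[OF \<open>bij \<sigma>\<close> \<open>u \<noteq> 0\<close> refl] by blast
  have "perm_act \<sigma> x = x \<longleftrightarrow> x $ k = x $ l" for x
  proof -
    have "perm_act \<sigma> x = x \<longleftrightarrow> x \<bullet> u = 0" using refl[of x] \<open>u \<noteq> 0\<close> by auto
    also have "\<dots> \<longleftrightarrow> x $ k = x $ l" using \<open>c \<noteq> 0\<close> by (simp add: u inner_axis_diff)
    finally show ?thesis .
  qed
  thus ?thesis using that kl H by blast
qed

section \<open>Chambers are stable under monotone coordinate changes\<close>

definition center_vec :: "real^'n \<Rightarrow> real^'n" where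
  "center_vec z = (\<chi> i. z $ i - (\<Sum>j\<in>UNIV. z $ j) / real CARD('n))"

definition sph_normalize :: "real^'n \<Rightarrow> real^'n" where
  "sph_normalize z = (1 / norm (center_vec z)) *\<^sub>R center_vec z"

lemma sum_center_vec: "(\<Sum>i\<in>UNIV. center_vec z $ i) = 0"
  by (simp add: center_vec_def sum_subtractf)

lemma center_vec_nth_eq_iff: "center_vec z $ i = center_vec z $ j \<longleftrightarrow> z $ i = z $ j"
  by (simp add: center_vec_def)

lemma center_vec_nonzero: "z $ i \<noteq> z $ j \<Longrightarrow> center_vec z \<noteq> 0"
  using center_vec_nth_eq_iff[of z i j] by auto

lemma sph_normalize_in_Sph: "center_vec z \<noteq> 0 \<Longrightarrow> sph_normalize z \<in> Sph"
  unfolding sph_normalize_def by (rule unit_vec_in_Sph) (simp_all add: sum_center_vec)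

lemma sph_normalize_nth_eq_iff:
  "center_vec z \<noteq> 0 \<Longrightarrow> sph_normalize z $ i = sph_normalize z $ j \<longleftrightarrow> z $ i = z $ j"
proof -
  assume "center_vec z \<noteq> 0"
  hence "sph_normalize z $ i = sph_normalize z $ j \<longleftrightarrow> center_vec z $ i = center_vec z $ j"
    by (simp add: sph_normalize_def)
  thus ?thesis by (simp only: center_vec_nth_eq_iff)
qed

lemma sph_normalize_Sph: "y \<in> Sph \<Longrightarrow> sph_normalize y = y"
  by (simp add: sph_normalize_def center_vec_def Sph_def)

definition coord_map :: "(real \<Rightarrow> real) \<Rightarrow> real^'n \<Rightarrow> real^'n" where
  "coord_map g y = (\<chi> i. g (y $ i))"

lemma coord_map_nth_eq_iff:
  "strict_mono g \<Longrightarrow> coord_map g y $ i = coord_map g y $ j \<longleftrightarrow> y $ i = y $ j"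
  by (simp add: coord_map_def strict_mono_eq)

lemma center_vec_coord_map_nonzero:
  assumes "strict_mono g" "y \<in> Sph"
  shows "center_vec (coord_map g y) \<noteq> 0"
proof -
  obtain i j where "y $ i \<noteq> y $ j" using Sph_not_const[OF assms(2)] .
  thus ?thesis using coord_map_nth_eq_iff[OF assms(1)] center_vec_nonzero by metis
qed

lemma sph_normalize_coord_map_nth_eq_iff:
  assumes "strict_mono g" "y \<in> Sph"
  shows "sph_normalize (coord_map g y) $ i = sph_normalize (coord_map g y) $ j \<longleftrightarrow> y $ i = y $ j"
  using sph_normalize_nth_eq_iff[OF center_vec_coord_map_nonzero[OF assms]]
    coord_map_nth_eq_iff[OF assms(1)] by simp

lemma sph_normalize_coord_map_in_Sph:
  "strict_mono g \<Longrightarrow> y \<in> Sph \<Longrightarrow> sph_normalize (coord_map g y) \<in> Sph"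
  by (intro sph_normalize_in_Sph center_vec_coord_map_nonzero)

abbreviation Sph_regular :: "(real^'n) set" where
  "Sph_regular \<equiv> Sph - \<Union>{H. is_wall H}"

lemma sph_normalize_coord_map_in_wall_iff:
  assumes "is_wall H" "strict_mono g" "y \<in> Sph"
  shows "sph_normalize (coord_map g y) \<in> H \<longleftrightarrow> y \<in> H"
proof -
  obtain k l where "H = {x\<in>Sph. x $ k = x $ l}" using assms(1) by (rule wall_eq_coord_eq)
  thus ?thesis using assms sph_normalize_coord_map_nth_eq_iff sph_normalize_coord_map_in_Sph
    by blast
qed

lemma sph_normalize_coord_map_regular:
  "strict_mono g \<Longrightarrow> y \<in> Sph_regular \<Longrightarrow> sph_normalize (coord_map g y) \<in> Sph_regular"
  using sph_normalize_coord_map_in_Sph sph_normalize_coord_map_in_wall_iff by blast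

lemma strict_mono_convex_comb:
  fixes g :: "real \<Rightarrow> real"
  assumes "strict_mono g" "0 \<le> t" "t \<le> 1"
  shows "strict_mono (\<lambda>s. (1 - t) * s + t * g s)"
proof (rule strict_monoI)
  fix s s' :: real assume "s < s'"
  hence "(1 - t) * s \<le> (1 - t) * s'" "t * g s \<le> t * g s'"
    using assms strict_monoD[OF assms(1) \<open>s < s'\<close>] by (auto intro!: mult_left_mono)
  moreover have "(1 - t) * s < (1 - t) * s' \<or> t * g s < t * g s'"
    using \<open>s < s'\<close> assms strict_monoD[OF assms(1) \<open>s < s'\<close>] by (cases "t = 1") auto
  ultimately show "(1 - t) * s + t * g s < (1 - t) * s' + t * g s'" by linarith
qed

lemma continuous_on_sph_normalize_coord_map_homotopy:
  assumes "strict_mono g" "y \<in> Sph"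
  shows "continuous_on {0..1} (\<lambda>t. sph_normalize (coord_map (\<lambda>s. (1 - t) * s + t * g s) y))"
proof -
  have "\<forall>t\<in>{0..1}. center_vec (coord_map (\<lambda>s. (1 - t) * s + t * g s) y) \<noteq> 0"
    using center_vec_coord_map_nonzero[OF strict_mono_convex_comb[OF assms(1)] assms(2)] by auto
  thus ?thesis unfolding sph_normalize_def center_vec_def coord_map_def
    by (intro continuous_intros) (auto simp: vec_eq_iff)
qed

lemma continuous_on_sph_normalize_coord_map:
  assumes "strict_mono g" "continuous_on UNIV g"
  shows "continuous_on Sph (\<lambda>y. sph_normalize (coord_map g y))"
proof -
  have "\<forall>y\<in>Sph. center_vec (coord_map g y) \<noteq> 0"
    using center_vec_coord_map_nonzero[OF assms(1)] by auto
  moreover have "continuous_on Sph (\<lambda>y::real^'n. g (y $ i))" for i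
    by (rule continuous_on_compose2[OF assms(2)]) (auto intro: continuous_intros)
  ultimately show ?thesis unfolding sph_normalize_def center_vec_def coord_map_def
    by (intro continuous_intros) (auto simp: vec_eq_iff)
qed

lemma chamber_subset_Sph:
  assumes "is_chamber C" shows "C \<subseteq> Sph"
proof -
  obtain x where C: "C = closure (connected_component_set Sph_regular x)"
    using assms unfolding is_chamber_def by blast
  have "connected_component_set Sph_regular x \<subseteq> Sph"
    using connected_component_subset by blast
  thus ?thesis unfolding C using closed_Sph by (rule closure_minimal)
qed

text \<open>The map is joined to the identity by the maps for \<open>(1 - t) s + t g(s)\<close>, none of which meets a
  wall starting off the walls; so connected components of the regular set are preserved.\<close>

lemma chamber_image_sph_normalize_coord_map:
  assumes "is_chamber C" "strict_mono g" "continuous_on UNIV g"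
  shows "(\<lambda>y. sph_normalize (coord_map g y)) ` C \<subseteq> C"
proof -
  obtain x where C: "C = closure (connected_component_set Sph_regular x)"
    using assms(1) unfolding is_chamber_def by blast
  define D where "D = connected_component_set Sph_regular x"
  have D_regular: "D \<subseteq> Sph_regular" unfolding D_def by (rule connected_component_subset)
  have image_D: "sph_normalize (coord_map g y) \<in> D" if "y \<in> D" for y
  proof -
    have yS: "y \<in> Sph" using that D_regular by auto
    define T where "T = (\<lambda>t. sph_normalize (coord_map (\<lambda>s. (1 - t) * s + t * g s) y)) ` {0..1}"
    have "connected T" unfolding T_def
      by (intro connected_continuous_image continuous_on_sph_normalize_coord_map_homotopy
          assms(2) yS) simp
    moreover have "T \<subseteq> Sph_regular" unfolding T_def using that D_regular
      by (auto intro!: sph_normalize_coord_map_regular strict_mono_convex_comb assms(2))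
    moreover have "y \<in> T" unfolding T_def
      by (rule image_eqI[of _ _ 0]) (simp_all add: coord_map_def sph_normalize_Sph[OF yS])
    moreover have "sph_normalize (coord_map g y) \<in> T" unfolding T_def
      by (rule image_eqI[of _ _ 1]) simp_all
    ultimately have "T \<subseteq> D"
      unfolding D_def using that connected_component_maximal connected_component_eq
      by (metis D_def)
    thus ?thesis using \<open>sph_normalize (coord_map g y) \<in> T\<close> by blast
  qed
  have closure_D: "closure D \<subseteq> Sph"
    using D_regular closed_Sph by (meson Diff_subset closure_minimal subset_trans)
  have "(\<lambda>y. sph_normalize (coord_map g y)) ` closure D \<subseteq> closure D"
    by (rule image_closure_subset[OF continuous_on_subset[OF
          continuous_on_sph_normalize_coord_map[OF assms(2,3)] closure_D] closed_closure])
       (use image_D closure_subset in blast)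
  thus ?thesis unfolding C D_def .
qed

section \<open>Vertices\<close>

lemma vertex_in_Sph: "is_vertex v \<Longrightarrow> v \<in> Sph"
  unfolding is_vertex_def is_face_def using chamber_subset_Sph by blast

lemma vertex_fixed_sph_normalize_coord_map:
  assumes "is_vertex v" "strict_mono g" "continuous_on UNIV g"
  shows "sph_normalize (coord_map g v) = v"
proof -
  obtain C \<H> where C: "is_chamber C" and walls: "\<forall>H\<in>\<H>. is_wall H" and v: "{v} = C \<inter> \<Inter>\<H>"
    using assms(1) unfolding is_vertex_def is_face_def by blast
  have "sph_normalize (coord_map g v) \<in> C"
    using chamber_image_sph_normalize_coord_map[OF C assms(2,3)] v by blast
  moreover have "sph_normalize (coord_map g v) \<in> \<Inter>\<H>"
    using sph_normalize_coord_map_in_wall_iff[OF _ assms(2) vertex_in_Sph[OF assms(1)]] walls v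
    by blast
  ultimately show ?thesis using v by blast
qed

text \<open>For coordinates \<open>v\<^sub>a < v\<^sub>b < v\<^sub>d\<close>, the map \<open>s \<mapsto> s + max 0 (s - v\<^sub>b)\<close> must fix \<open>v\<close>, but it
  stretches only the gaps above \<open>v\<^sub>b\<close>, which no centring and rescaling can undo.\<close>

lemma vertex_no_three_values:
  assumes "is_vertex (v::real^'n)"
  shows "v $ a = v $ b \<or> v $ b = v $ d \<or> v $ a = v $ d"
proof -
  have not_increasing: "\<not> (v $ a < v $ b \<and> v $ b < v $ d)" for a b d
  proof
    assume ord: "v $ a < v $ b \<and> v $ b < v $ d"
    define g where "g s = s + max 0 (s - v $ b)" for s
    have "strict_mono g" by (rule strict_monoI) (auto simp: g_def)
    moreover have "continuous_on UNIV g" unfolding g_def by (intro continuous_intros)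
    ultimately have fixed: "sph_normalize (coord_map g v) = v"
      using vertex_fixed_sph_normalize_coord_map[OF assms] by blast
    define N where "N = norm (center_vec (coord_map g v))"
    define m where "m = (\<Sum>j\<in>UNIV. g (v $ j)) / real CARD('n)"
    have "N \<noteq> 0" unfolding N_def
      using center_vec_coord_map_nonzero[OF \<open>strict_mono g\<close> vertex_in_Sph[OF assms]] by simp
    have nth: "v $ i = (g (v $ i) - m) / N" for i
      using arg_cong[OF fixed, of "\<lambda>x. x $ i"]
      by (simp add: sph_normalize_def center_vec_def coord_map_def N_def m_def)
    have ea: "v $ a - m = N * v $ a" and eb: "v $ b - m = N * v $ b"
      and ed: "2 * v $ d - v $ b - m = N * v $ d"
      using nth[of a] nth[of b] nth[of d] ord \<open>N \<noteq> 0\<close> by (simp_all add: g_def field_simps)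
    have "(N - 1) * (v $ a - v $ b) = 0" using ea eb by (simp add: algebra_simps)
    hence "N = 1" using ord by simp
    thus False using ea eb ed ord by simp
  qed
  show ?thesis
    using not_increasing[of a b d] not_increasing[of a d b] not_increasing[of b a d]
      not_increasing[of b d a] not_increasing[of d a b] not_increasing[of d b a]
    by linarith
qed

section \<open>Roots and the distance to their boundary\<close>

lemma hemisphere_boundary:
  "{x\<in>Sph. x \<bullet> u = 0} = {x\<in>{y\<in>Sph. 0 \<le> y \<bullet> u}. - x \<in> {y\<in>Sph. 0 \<le> y \<bullet> u}}"
  unfolding set_eq_iff mem_Collect_eq Sph_uminus inner_minus_left by linarith

lemma root_cases:
  assumes "is_root (\<alpha>::(real^'n) set)"
  obtains u k l where "k \<noteq> l" "\<alpha> = {x\<in>Sph. 0 \<le> x \<bullet> u}"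
    "root_bdry \<alpha> = {x\<in>Sph. x \<bullet> u = 0}" "{x\<in>Sph. x \<bullet> u = 0} = {x\<in>Sph. x $ k = x $ l}"
proof -
  obtain u where "u \<noteq> 0" and wall: "is_wall {x\<in>Sph. x \<bullet> u = 0}"
    and \<alpha>: "\<alpha> = {x\<in>Sph. 0 \<le> x \<bullet> u}"
    using assms unfolding is_root_def by blast
  obtain k l where "k \<noteq> l" "{x\<in>Sph. x \<bullet> u = 0} = {x\<in>Sph. x $ k = x $ l}"
    using wall by (rule wall_eq_coord_eq)
  txt \<open>The boundary is determined by the hemisphere alone, so the \<open>THE\<close> in \<open>root_bdry\<close>
    is not a junk value.\<close>
  moreover have "root_bdry \<alpha> = {x\<in>Sph. x \<bullet> u = 0}"
    unfolding root_bdry_def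
  proof (rule the_equality)
    fix H
    assume "is_wall H \<and> (\<exists>u'. u' \<noteq> 0 \<and> H = {x\<in>Sph. x \<bullet> u' = 0} \<and> \<alpha> = {x\<in>Sph. 0 \<le> x \<bullet> u'})"
    then obtain u' where "H = {x\<in>Sph. x \<bullet> u' = 0}" "\<alpha> = {x\<in>Sph. 0 \<le> x \<bullet> u'}" by blast
    thus "H = {x\<in>Sph. x \<bullet> u = 0}"
      using hemisphere_boundary[of u'] hemisphere_boundary[of u] \<alpha> by simp
  qed (use \<open>u \<noteq> 0\<close> wall \<alpha> in blast)
  ultimately show ?thesis using that \<alpha> by blast
qed

lemma coord_wall_nonempty:
  assumes "CARD('n) \<ge> 3" "k \<noteq> l"
  obtains x :: "real^'n" where "x \<in> Sph" "x $ k = x $ l"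
proof -
  obtain m where m: "m \<noteq> k" "m \<noteq> l"
  proof -
    have "\<not> UNIV \<subseteq> {k, l}"
    proof
      assume "UNIV \<subseteq> {k, l}"
      hence "CARD('n) \<le> card {k, l}" by (intro card_mono) auto
      thus False using assms by simp
    qed
    thus ?thesis using that by blast
  qed
  define q :: "real^'n" where "q = axis k 1 + axis l 1 - 2 *\<^sub>R axis m 1"
  have "q $ m = -2" using m by (simp add: q_def axis_def)
  hence "q \<noteq> 0" by auto
  moreover have "(\<Sum>i\<in>UNIV. q $ i) = 0"
    by (simp add: q_def sum.distrib sum_subtractf sum_distrib_left[symmetric] sum_axis_one)
  moreover have "q $ k = q $ l" using m assms(2) by (simp add: q_def axis_def)
  ultimately show ?thesis using that unit_vec_in_Sph by (metis vector_scaleR_component)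
qed

lemma coord_wall_point_maximizing_inner:
  assumes "CARD('n) \<ge> 3" "k \<noteq> l" "(\<Sum>i\<in>UNIV. p $ i) = 0" "p $ k = p $ l"
  obtains x :: "real^'n" where "x \<in> Sph" "x $ k = x $ l" "p \<bullet> x = norm p"
proof (cases "p = 0")
  case True
  thus ?thesis using coord_wall_nonempty[OF assms(1,2)] that by auto
next
  case False
  have "(1 / norm p) *\<^sub>R p \<in> Sph" using False assms(3) by (rule unit_vec_in_Sph)
  moreover have "p \<bullet> ((1 / norm p) *\<^sub>R p) = norm p"
    by (simp add: dot_square_norm power2_eq_square)
  ultimately show ?thesis using that assms(4) by simp
qed

text \<open>On the wall \<open>x\<^sub>k = x\<^sub>l\<close> the linear form \<open>v \<bullet> x\<close> agrees with \<open>p \<bullet> x\<close>, where \<open>p\<close> is the orthogonal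
  projection of \<open>v\<close> onto the hyperplane; hence the nearest wall point is at angle
  \<open>arccos \<parallel>p\<parallel>\<close>, and \<open>\<parallel>p\<parallel>\<^sup>2 = 1 - (v\<^sub>k - v\<^sub>l)\<^sup>2 / 2\<close>.\<close>

lemma sin_sdist_set_coord_wall:
  assumes "CARD('n) \<ge> 3" "k \<noteq> l" "(v::real^'n) \<in> Sph"
  shows "sin (sdist_set v {x\<in>Sph. x $ k = x $ l}) = \<bar>v $ k - v $ l\<bar> / sqrt 2"
proof -
  define d :: "real^'n" where "d = axis k 1 - axis l 1"
  define \<delta> where "\<delta> = v $ k - v $ l"
  define p where "p = v - (\<delta> / 2) *\<^sub>R d"
  have dd: "d \<bullet> d = 2" using assms(2)
    by (simp add: d_def inner_diff_right inner_diff_left inner_axis_axis)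
  have vv: "v \<bullet> v = 1" using assms(3) by (simp add: Sph_def dot_square_norm)
  have vd: "v \<bullet> d = \<delta>" by (simp add: d_def \<delta>_def inner_axis_diff)
  have "norm p ^ 2 = p \<bullet> p" by (simp add: power2_norm_eq_inner)
  also have "\<dots> = 1 - \<delta>^2 / 2" unfolding p_def using vd dd vv inner_commute[of d v]
    by (simp add: inner_diff_right inner_diff_left power2_eq_square algebra_simps)
  finally have norm_p: "norm p ^ 2 = 1 - \<delta>^2 / 2" .
  hence "norm p ^ 2 \<le> 1 ^ 2" by simp
  hence norm_p_le: "norm p \<le> 1" by (rule power2_le_imp_le) simp
  have inner_wall: "v \<bullet> x = p \<bullet> x" if "x $ k = x $ l" for x
  proof -
    have "d \<bullet> x = 0" using that inner_axis_diff[of x k l] by (simp add: d_def inner_commute)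
    thus ?thesis by (simp add: p_def inner_diff_left)
  qed
  have "(\<Sum>i\<in>UNIV. d $ i) = 0" by (simp add: d_def sum_subtractf sum_axis_one)
  hence "(\<Sum>i\<in>UNIV. p $ i) = 0"
    using assms(3) by (simp add: p_def sum_subtractf Sph_def sum_divide_distrib[symmetric]
        sum_distrib_left[symmetric])
  moreover have "p $ k = p $ l" using assms(2) by (simp add: p_def d_def \<delta>_def axis_def field_simps)
  ultimately obtain x0 where x0: "x0 \<in> Sph" "x0 $ k = x0 $ l" "p \<bullet> x0 = norm p"
    using coord_wall_point_maximizing_inner[OF assms(1,2)] by blast
  have "sdist_set v {x\<in>Sph. x $ k = x $ l} = arccos (norm p)"
    unfolding sdist_set_def
  proof (rule cInf_eq_minimum)
    show "arccos (norm p) \<in> sdist v ` {x\<in>Sph. x $ k = x $ l}"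
      using x0 inner_wall unfolding sdist_def by force
  next
    fix y assume "y \<in> sdist v ` {x\<in>Sph. x $ k = x $ l}"
    then obtain x where x: "x \<in> Sph" "x $ k = x $ l" "y = arccos (p \<bullet> x)"
      unfolding sdist_def using inner_wall by auto
    have "norm x = 1" using x(1) by (simp add: Sph_def)
    hence "\<bar>p \<bullet> x\<bar> \<le> 1" "p \<bullet> x \<le> norm p"
      using Cauchy_Schwarz_ineq2[of p x] norm_cauchy_schwarz[of p x] norm_p_le by auto
    thus "arccos (norm p) \<le> y" unfolding x(3) using norm_p_le by (intro arccos_le_arccos) auto
  qed
  moreover have "sin (arccos (norm p)) = sqrt (1 - (norm p)^2)"
    using norm_p_le norm_ge_zero[of p] by (intro sin_arccos) linarith+
  ultimately show ?thesis by (simp add: norm_p \<delta>_def real_sqrt_divide)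
qed

lemma sin_sdist_set_root_bdry:
  assumes "CARD('n) \<ge> 3" "is_root (\<alpha>::(real^'n) set)" "v \<in> \<alpha> - root_bdry \<alpha>"
  obtains k l where "v $ k \<noteq> v $ l" "sin (sdist_set v (root_bdry \<alpha>)) = \<bar>v $ k - v $ l\<bar> / sqrt 2"
proof -
  obtain u k l where kl: "k \<noteq> l" and \<alpha>: "\<alpha> = {x\<in>Sph. 0 \<le> x \<bullet> u}"
    and "root_bdry \<alpha> = {x\<in>Sph. x \<bullet> u = 0}" "{x\<in>Sph. x \<bullet> u = 0} = {x\<in>Sph. x $ k = x $ l}"
    using root_cases[OF assms(2)] .
  hence bdry: "root_bdry \<alpha> = {x\<in>Sph. x $ k = x $ l}" by simp
  have "v \<in> Sph" using assms(3) \<alpha> by blast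
  show ?thesis
  proof (rule that)
    show "v $ k \<noteq> v $ l" using assms(3) bdry \<open>v \<in> Sph\<close> by blast
    show "sin (sdist_set v (root_bdry \<alpha>)) = \<bar>v $ k - v $ l\<bar> / sqrt 2"
      unfolding bdry by (rule sin_sdist_set_coord_wall[OF assms(1) kl \<open>v \<in> Sph\<close>])
  qed
qed

section \<open>Interior vertices of convex subcomplexes\<close>

lemma Sph_near_boundary_point_below_hyperplane:
  assumes "v \<in> Sph" "v \<bullet> u = 0" "(\<Sum>i\<in>UNIV. w $ i) = 0" "w \<bullet> u < 0" "e > 0"
  obtains y where "y \<in> Sph" "y \<in> ball v e" "y \<bullet> u < 0"
proof -
  define f where "f t = (1 / norm (v + t *\<^sub>R w)) *\<^sub>R (v + t *\<^sub>R w)" for t :: real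
  have "norm v = 1" using assms(1) by (simp add: Sph_def)
  have lim: "((\<lambda>t. v + t *\<^sub>R w) \<longlongrightarrow> v) (at_right 0)"
    by (rule tendsto_eq_intros refl)+ simp
  hence "(f \<longlongrightarrow> (1 / norm v) *\<^sub>R v) (at_right 0)"
    unfolding f_def using \<open>norm v = 1\<close> by (intro tendsto_intros) simp_all
  hence "\<forall>\<^sub>F t in at_right 0. f t \<in> ball v e"
    using assms(5) \<open>norm v = 1\<close> by (auto simp: dist_commute dest: tendstoD)
  moreover have "\<forall>\<^sub>F t in at_right 0. v + t *\<^sub>R w \<noteq> 0"
    by (rule tendsto_imp_eventually_ne[OF lim]) (use \<open>norm v = 1\<close> in auto)
  moreover have "\<forall>\<^sub>F t in at_right (0::real). 0 < t" by (rule eventually_at_right_less)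
  ultimately have "\<forall>\<^sub>F t in at_right 0. f t \<in> ball v e \<and> v + t *\<^sub>R w \<noteq> 0 \<and> 0 < t"
    by (intro eventually_conj)
  then obtain t where t: "f t \<in> ball v e" "v + t *\<^sub>R w \<noteq> 0" "0 < t"
    using eventually_happens'[OF trivial_limit_at_right_real] by blast
  have "(\<Sum>i\<in>UNIV. (v + t *\<^sub>R w) $ i) = 0"
    using assms(1,3) by (simp add: Sph_def sum.distrib sum_distrib_left[symmetric])
  hence "f t \<in> Sph" unfolding f_def using t(2) by (intro unit_vec_in_Sph)
  moreover have "f t \<bullet> u < 0"
    using t assms(2,4) by (simp add: f_def inner_add_left mult_pos_neg divide_neg_pos)
  ultimately show ?thesis using that t(1) by blast
qed

lemma s_interior_notin_root_bdry:
  assumes "is_root (\<alpha>::(real^'n) set)" "K \<subseteq> \<alpha>" "v \<in> s_interior K"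
  shows "v \<notin> root_bdry \<alpha>"
proof
  assume "v \<in> root_bdry \<alpha>"
  obtain u k l where "k \<noteq> l" and \<alpha>: "\<alpha> = {x\<in>Sph. 0 \<le> x \<bullet> u}"
    and bdry: "root_bdry \<alpha> = {x\<in>Sph. x \<bullet> u = 0}"
    and wall: "{x\<in>Sph. x \<bullet> u = 0} = {x\<in>Sph. x $ k = x $ l}"
    using root_cases[OF assms(1)] .
  have v: "v \<in> Sph" "v \<bullet> u = 0" using \<open>v \<in> root_bdry \<alpha>\<close> bdry by auto
  obtain e where "e > 0" and ball: "Sph \<inter> ball v e \<subseteq> K"
    using assms(3) unfolding s_interior_def by blast
  define d :: "real^'n" where "d = axis k 1 - axis l 1"
  have d_sum: "(\<Sum>i\<in>UNIV. d $ i) = 0" by (simp add: d_def sum_subtractf sum_axis_one)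
  have d_kl: "d $ k \<noteq> d $ l" using \<open>k \<noteq> l\<close> by (simp add: d_def axis_def)
  hence "d \<noteq> 0" by auto
  have "d \<bullet> u \<noteq> 0"
  proof
    assume "d \<bullet> u = 0"
    hence "(1 / norm d) *\<^sub>R d \<in> {x\<in>Sph. x \<bullet> u = 0}"
      using unit_vec_in_Sph[OF \<open>d \<noteq> 0\<close> d_sum] by simp
    thus False using wall d_kl \<open>d \<noteq> 0\<close> by simp
  qed
  define w where "w = (if d \<bullet> u > 0 then - d else d)"
  have "(\<Sum>i\<in>UNIV. w $ i) = 0" using d_sum by (simp add: w_def sum_negf)
  moreover have "w \<bullet> u < 0" using \<open>d \<bullet> u \<noteq> 0\<close> by (auto simp: w_def)
  ultimately obtain y where "y \<in> Sph" "y \<in> ball v e" "y \<bullet> u < 0"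
    using Sph_near_boundary_point_below_hyperplane[OF v] \<open>e > 0\<close> by metis
  hence "y \<in> \<alpha>" using ball assms(2) by blast
  thus False using \<open>y \<bullet> u < 0\<close> \<alpha> by simp
qed

lemma vtype_eq_obtain_perm:
  assumes "vtype v = vtype v'"
  obtains \<sigma> where "v' = perm_act \<sigma> v"
proof -
  have "perm_act id \<in> Weyl" unfolding Weyl_def by auto
  moreover have "perm_act id v' = v'" by (simp add: perm_act_def)
  ultimately have "v' \<in> vtype v'" unfolding vtype_def by (metis image_eqI)
  hence "v' \<in> vtype v" by (simp add: assms)
  thus ?thesis using that unfolding vtype_def Weyl_def by blast
qed

lemma abs_diff_eq_if_no_three_values:
  fixes v :: "real^'n"
  assumes "\<And>a b d. v $ a = v $ b \<or> v $ b = v $ d \<or> v $ a = v $ d"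
    and "v $ k \<noteq> v $ l" "v $ i \<noteq> v $ j"
  shows "\<bar>v $ i - v $ j\<bar> = \<bar>v $ k - v $ l\<bar>"
proof -
  have "v $ i = v $ k \<or> v $ i = v $ l" "v $ j = v $ k \<or> v $ j = v $ l"
    using assms(1)[of i k l] assms(1)[of j k l] assms(2) by auto
  thus ?thesis using assms(3) abs_minus_commute[of "v $ k" "v $ l"] by auto
qed

lemma sin_sdist_set_root_bdry_vtype_invariant:
  assumes "CARD('n) \<ge> 3" "is_root (\<alpha>::(real^'n) set)" "is_root \<alpha>'" "is_vertex v"
    "v \<in> \<alpha> - root_bdry \<alpha>" "v' \<in> \<alpha>' - root_bdry \<alpha>'" "vtype v = vtype v'"
  shows "sin (sdist_set v (root_bdry \<alpha>)) = sin (sdist_set v' (root_bdry \<alpha>'))"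
proof -
  obtain k l where "v $ k \<noteq> v $ l" and sin_v: "sin (sdist_set v (root_bdry \<alpha>)) = \<bar>v $ k - v $ l\<bar> / sqrt 2"
    using sin_sdist_set_root_bdry[OF assms(1,2,5)] .
  obtain i j where "v' $ i \<noteq> v' $ j"
    and sin_v': "sin (sdist_set v' (root_bdry \<alpha>')) = \<bar>v' $ i - v' $ j\<bar> / sqrt 2"
    using sin_sdist_set_root_bdry[OF assms(1,3,6)] .
  obtain \<sigma> where v': "v' = perm_act \<sigma> v" using assms(7) by (rule vtype_eq_obtain_perm)
  have "\<bar>v $ \<sigma> i - v $ \<sigma> j\<bar> = \<bar>v $ k - v $ l\<bar>"
    using vertex_no_three_values[OF assms(4)] \<open>v $ k \<noteq> v $ l\<close> \<open>v' $ i \<noteq> v' $ j\<close>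
    by (intro abs_diff_eq_if_no_three_values) (auto simp: v' perm_act_def)
  thus ?thesis using sin_v sin_v' by (simp add: v' perm_act_def)
qed

lemma fK_eq_if_const:
  assumes "Lambda K \<noteq> {}" "\<And>\<beta>. \<beta> \<in> Lambda K \<Longrightarrow> sin (sdist_set v (root_bdry \<beta>)) = c"
  shows "fK K v = - c"
proof -
  have "(\<lambda>\<beta>. - sin (sdist_set v (root_bdry \<beta>))) ` Lambda K = {- c}"
    using assms by force
  thus ?thesis by (simp add: fK_def)
qed

lemma Lambda_nonempty_interior:
  assumes "convex_subcomplex K" "K \<noteq> Sph" "v \<in> s_interior K"
  shows "Lambda K \<noteq> {}" and "\<And>\<beta>. \<beta> \<in> Lambda K \<Longrightarrow> v \<in> \<beta> - root_bdry \<beta>"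
proof -
  obtain \<A> where "\<forall>\<alpha>\<in>\<A>. is_root \<alpha>" "K = Sph \<inter> \<Inter>\<A>"
    using assms(1) unfolding convex_subcomplex_def by blast
  moreover have "\<A> \<noteq> {}" using calculation assms(2) by auto
  ultimately show "Lambda K \<noteq> {}" unfolding Lambda_def by blast
  show "v \<in> \<beta> - root_bdry \<beta>" if "\<beta> \<in> Lambda K" for \<beta>
    using that s_interior_notin_root_bdry assms(3) unfolding Lambda_def s_interior_def by blast
qed

theorem lemma2p13:
  assumes "CARD('n::finite) \<ge> 3"
  shows "(\<forall>(\<alpha>::(real^'n) set) v. is_root \<alpha> \<and> is_vertex v \<and> v \<in> \<alpha> - root_bdry \<alpha> \<longrightarrow>
            sin (sdist_set v (root_bdry \<alpha>)) > 0)
       \<and> (\<forall>(\<alpha>::(real^'n) set) \<alpha>' v v'.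
            is_root \<alpha> \<and> is_root \<alpha>' \<and> is_vertex v \<and> is_vertex v' \<and>
            v \<in> \<alpha> - root_bdry \<alpha> \<and> v' \<in> \<alpha>' - root_bdry \<alpha>' \<and> vtype v = vtype v' \<longrightarrow>
            sin (sdist_set v (root_bdry \<alpha>)) = sin (sdist_set v' (root_bdry \<alpha>')))
       \<and> (\<forall>(K::(real^'n) set) v. convex_subcomplex K \<and> top_dimensional K \<and> K \<noteq> Sph \<and>
            is_vertex v \<and> v \<in> s_interior K \<longrightarrow>
            (\<exists>\<alpha>. is_root \<alpha> \<and> v \<in> \<alpha> - root_bdry \<alpha>) \<and>
            (\<forall>\<alpha>. is_root \<alpha> \<and> v \<in> \<alpha> - root_bdry \<alpha> \<longrightarrow>
                 fK K v = - sin (sdist_set v (root_bdry \<alpha>))))"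
proof (intro conjI allI impI; (elim conjE)?)
  fix \<alpha> :: "(real^'n) set" and v
  assume "is_root \<alpha>" "v \<in> \<alpha> - root_bdry \<alpha>"
  then obtain k l where "v $ k \<noteq> v $ l" "sin (sdist_set v (root_bdry \<alpha>)) = \<bar>v $ k - v $ l\<bar> / sqrt 2"
    using sin_sdist_set_root_bdry[OF assms] by blast
  thus "sin (sdist_set v (root_bdry \<alpha>)) > 0" by simp
next
  fix \<alpha> \<alpha>' :: "(real^'n) set" and v v'
  assume "is_root \<alpha>" "is_root \<alpha>'" "is_vertex v" "v \<in> \<alpha> - root_bdry \<alpha>"
    "v' \<in> \<alpha>' - root_bdry \<alpha>'" "vtype v = vtype v'"
  thus "sin (sdist_set v (root_bdry \<alpha>)) = sin (sdist_set v' (root_bdry \<alpha>'))"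
    by (rule sin_sdist_set_root_bdry_vtype_invariant[OF assms])
next
  fix K :: "(real^'n) set" and v
  assume "convex_subcomplex K" "K \<noteq> Sph" "v \<in> s_interior K"
  thus "\<exists>\<alpha>. is_root \<alpha> \<and> v \<in> \<alpha> - root_bdry \<alpha>"
    using Lambda_nonempty_interior unfolding Lambda_def by blast
next
  fix K :: "(real^'n) set" and v \<alpha>
  assume K: "convex_subcomplex K" "K \<noteq> Sph" "v \<in> s_interior K"
    and "is_vertex v" "is_root \<alpha>" "v \<in> \<alpha> - root_bdry \<alpha>"
  have "Lambda K \<noteq> {}" by (rule Lambda_nonempty_interior(1)[OF K])
  moreover have "sin (sdist_set v (root_bdry \<beta>)) = sin (sdist_set v (root_bdry \<alpha>))"
    if "\<beta> \<in> Lambda K" for \<beta>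
    using that Lambda_nonempty_interior(2)[OF K that] unfolding Lambda_def
    by (intro sin_sdist_set_root_bdry_vtype_invariant[OF assms _ \<open>is_root \<alpha>\<close> \<open>is_vertex v\<close> _
          \<open>v \<in> \<alpha> - root_bdry \<alpha>\<close>]) simp_all
  ultimately show "fK K v = - sin (sdist_set v (root_bdry \<alpha>))" by (rule fK_eq_if_const)
qed

end
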